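(* Let $\kappa$ be a regular uncountable cardinal and assume $\kappa^{<\kappa}=\kappa$. If $(L,<_L)$ is a linear order of cardinality $>\kappa$, then Player I has a winning strategy in the game $G_\kappa(L)$. Hence, under $\kappa^{<\kappa}=\kappa$, the game $G_\kappa(L)$ is determined for every linear order $L$.
   Context: For a partial order $(A,\le)$, $X\subseteq A$ is cofinal (coinitial) in $A$ if for every $a\in A$ there is $x\in X$ with $a\le x$ ($a\ge x$); $\mathrm{cf}\,A$ ($\mathrm{ci}\,A$) is the least cardinality of a cofinal (coinitial) subset. For $R\subseteq A$ and $a\in A$ put $R\downarrow a=\{x\in R: x\le a\}$ and $R\uparrow a=\{x\in R: a\le x\}$. $R$ is a $\kappa$-subset of $A$, written $R\le_\kappa A$, if for every $a\in A$, $\mathrm{cf}(R\downarrow a)<\kappa$ and $\mathrm{ci}(R\uparrow a)<\kappa$. The game $G_\kappa(A)$: Players I and II alternately choose subsets $x_\alpha$ (by I) and $y_\alpha$ (by II) of $A$ for $\alpha<\kappa$ (in the order $x_0,y_0,x_1,y_1,\dots$), each of size $<\kappa$, such that $x_\alpha\subseteq y_\alpha$ and $\bigcup_{\nu<\alpha}y_\nu\subseteq x_\alpha$. Player II wins the play iff $R=\bigcup_{\alpha<\kappa}x_\alpha=\bigcup_{\alpha<\kappa}y_\alpha$ satisfies $R\le_\kappa A$; otherwise Player I wins. The game is determined if one of the players has a winning strategy. *)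

theory Defs
  imports Main
begin

unbundle cardinal_syntax

text \<open>Cardinals are represented in the BNF-library style: a cardinal kappa is a
card order k (a well-order on Field k which is an initial ordinal).  The ordinals
alpha < kappa are the elements of Field k, ordered by k.\<close>

text \<open>kappa^(<kappa) = kappa: for every cardinal lambda < kappa (realised by a set
A of size lambda inside Field k), kappa^lambda = |Func A (Field k)| is at most kappa
(the inequality kappa \<le> kappa^(<kappa) is trivial).\<close>
definition kappa_less_kappa_eq :: "'k rel \<Rightarrow> bool" where
  "kappa_less_kappa_eq k \<longleftrightarrow>
     (\<forall>A. A \<subseteq> Field k \<and> |A| <o k \<longrightarrow> |Func A (Field k)| \<le>o k)"

definition cofinal_in :: "'a rel \<Rightarrow> 'a set \<Rightarrow> 'a set \<Rightarrow> bool" where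
  "cofinal_in r Y X \<longleftrightarrow> Y \<subseteq> X \<and> (\<forall>a\<in>X. \<exists>y\<in>Y. (a, y) \<in> r)"

definition coinitial_in :: "'a rel \<Rightarrow> 'a set \<Rightarrow> 'a set \<Rightarrow> bool" where
  "coinitial_in r Y X \<longleftrightarrow> Y \<subseteq> X \<and> (\<forall>a\<in>X. \<exists>y\<in>Y. (y, a) \<in> r)"

text \<open>cf X < kappa: the least cardinality of a cofinal subset is below kappa,
i.e. some cofinal subset has size < kappa.\<close>
definition cf_less :: "'a rel \<Rightarrow> 'k rel \<Rightarrow> 'a set \<Rightarrow> bool" where
  "cf_less r k X \<longleftrightarrow> (\<exists>Y. cofinal_in r Y X \<and> |Y| <o k)"

definition ci_less :: "'a rel \<Rightarrow> 'k rel \<Rightarrow> 'a set \<Rightarrow> bool" where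
  "ci_less r k X \<longleftrightarrow> (\<exists>Y. coinitial_in r Y X \<and> |Y| <o k)"

definition down_set :: "'a rel \<Rightarrow> 'a set \<Rightarrow> 'a \<Rightarrow> 'a set" where
  "down_set r R a = {x\<in>R. (x, a) \<in> r}"

definition up_set :: "'a rel \<Rightarrow> 'a set \<Rightarrow> 'a \<Rightarrow> 'a set" where
  "up_set r R a = {x\<in>R. (a, x) \<in> r}"

definition kappa_subset :: "'a set \<Rightarrow> 'a rel \<Rightarrow> 'k rel \<Rightarrow> 'a set \<Rightarrow> bool" where
  "kappa_subset A r k R \<longleftrightarrow> R \<subseteq> A \<and>
     (\<forall>a\<in>A. cf_less r k (down_set r R a) \<and> ci_less r k (up_set r R a))"

text \<open>The game G_kappa(A).  A play is a function p from Field k (the ordinals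
alpha < kappa) to pairs (x_alpha, y_alpha).  The history before alpha is p restricted
to the strict predecessors of alpha.\<close>
definition restr :: "'k rel \<Rightarrow> ('k \<Rightarrow> 'a set \<times> 'a set) \<Rightarrow> 'k \<Rightarrow> ('k \<Rightarrow> 'a set \<times> 'a set)" where
  "restr k p \<alpha> = (\<lambda>\<nu>. if \<nu> \<in> underS k \<alpha> then p \<nu> else ({}, {}))"

definition moveI_ok :: "'a set \<Rightarrow> 'k rel \<Rightarrow> ('k \<Rightarrow> 'a set \<times> 'a set) \<Rightarrow> 'k \<Rightarrow> bool" where
  "moveI_ok A k p \<alpha> \<longleftrightarrow> fst (p \<alpha>) \<subseteq> A \<and> |fst (p \<alpha>)| <o k \<and>
     (\<Union>\<nu>\<in>underS k \<alpha>. snd (p \<nu>)) \<subseteq> fst (p \<alpha>)"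

definition moveII_ok :: "'a set \<Rightarrow> 'k rel \<Rightarrow> ('k \<Rightarrow> 'a set \<times> 'a set) \<Rightarrow> 'k \<Rightarrow> bool" where
  "moveII_ok A k p \<alpha> \<longleftrightarrow> snd (p \<alpha>) \<subseteq> A \<and> |snd (p \<alpha>)| <o k \<and> fst (p \<alpha>) \<subseteq> snd (p \<alpha>)"

definition legal_play :: "'a set \<Rightarrow> 'k rel \<Rightarrow> ('k \<Rightarrow> 'a set \<times> 'a set) \<Rightarrow> bool" where
  "legal_play A k p \<longleftrightarrow> (\<forall>\<alpha>\<in>Field k. moveI_ok A k p \<alpha> \<and> moveII_ok A k p \<alpha>)"

definition play_result :: "'k rel \<Rightarrow> ('k \<Rightarrow> 'a set \<times> 'a set) \<Rightarrow> 'a set" where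
  "play_result k p = (\<Union>\<alpha>\<in>Field k. snd (p \<alpha>))"

text \<open>Strategy of Player I: given alpha and the history before alpha, choose x_alpha.\<close>
definition winning_I :: "'a set \<Rightarrow> 'a rel \<Rightarrow> 'k rel \<Rightarrow>
    ('k \<Rightarrow> ('k \<Rightarrow> 'a set \<times> 'a set) \<Rightarrow> 'a set) \<Rightarrow> bool" where
  "winning_I A r k \<sigma> \<longleftrightarrow>
     (\<forall>p. \<forall>\<alpha>\<in>Field k.
        (\<forall>\<beta>\<in>underS k \<alpha>. moveI_ok A k p \<beta> \<and> moveII_ok A k p \<beta>) \<and>
        (\<forall>\<beta>\<in>under k \<alpha>. fst (p \<beta>) = \<sigma> \<beta> (restr k p \<beta>))
        \<longrightarrow> moveI_ok A k p \<alpha>) \<and>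
     (\<forall>p. legal_play A k p \<and> (\<forall>\<beta>\<in>Field k. fst (p \<beta>) = \<sigma> \<beta> (restr k p \<beta>))
        \<longrightarrow> \<not> kappa_subset A r k (play_result k p))"

text \<open>Strategy of Player II: given alpha, the history before alpha and I's current
move x_alpha, choose y_alpha.\<close>
definition winning_II :: "'a set \<Rightarrow> 'a rel \<Rightarrow> 'k rel \<Rightarrow>
    ('k \<Rightarrow> ('k \<Rightarrow> 'a set \<times> 'a set) \<Rightarrow> 'a set \<Rightarrow> 'a set) \<Rightarrow> bool" where
  "winning_II A r k \<tau> \<longleftrightarrow>
     (\<forall>p. \<forall>\<alpha>\<in>Field k.
        (\<forall>\<beta>\<in>underS k \<alpha>. moveI_ok A k p \<beta> \<and> moveII_ok A k p \<beta>) \<and> moveI_ok A k p \<alpha> \<and>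
        (\<forall>\<beta>\<in>under k \<alpha>. snd (p \<beta>) = \<tau> \<beta> (restr k p \<beta>) (fst (p \<beta>)))
        \<longrightarrow> moveII_ok A k p \<alpha>) \<and>
     (\<forall>p. legal_play A k p \<and> (\<forall>\<beta>\<in>Field k. snd (p \<beta>) = \<tau> \<beta> (restr k p \<beta>) (fst (p \<beta>)))
        \<longrightarrow> kappa_subset A r k (play_result k p))"

definition I_wins :: "'a set \<Rightarrow> 'a rel \<Rightarrow> 'k rel \<Rightarrow> bool" where
  "I_wins A r k \<longleftrightarrow> (\<exists>\<sigma>. winning_I A r k \<sigma>)"

definition II_wins :: "'a set \<Rightarrow> 'a rel \<Rightarrow> 'k rel \<Rightarrow> bool" where
  "II_wins A r k \<longleftrightarrow> (\<exists>\<tau>. winning_II A r k \<tau>)"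

definition determined :: "'a set \<Rightarrow> 'a rel \<Rightarrow> 'k rel \<Rightarrow> bool" where
  "determined A r k \<longleftrightarrow> I_wins A r k \<or> II_wins A r k"

end

theory Submission
  imports Defs
begin

text \<open>For \<open>|L| > \<kappa>\<close>, Player I fills every cut he has seen. At stage \<open>\<alpha>\<close> he plays
everything played so far together with, for all earlier stages \<open>\<gamma>\<close> and all \<open>i < \<alpha>\<close>,
one point strictly inside the cut of \<open>Y\<^sub>\<gamma>\<close> (the points played before \<open>\<gamma>\<close>) described
by the \<open>i\<close>-th subset of \<open>Y\<^sub>\<gamma>\<close>; the subsets of \<open>Y\<^sub>\<gamma>\<close> can be listed in length \<open>\<kappa>\<close>
because \<open>\<kappa>\<^bsup><\<kappa>\<^esup> = \<kappa>\<close>. If the resulting set \<open>R\<close> were a \<open>\<kappa>\<close>-subset, a point \<open>a \<in> L - R\<close>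
would be approximated from below and from above by fewer than \<open>\<kappa>\<close> points of \<open>R\<close>. By
regularity they all lie in some \<open>Y\<^sub>\<gamma>\<close>, and the cut of \<open>Y\<^sub>\<gamma>\<close> at \<open>a\<close> is later filled
by a point of \<open>R\<close> lying strictly between \<open>a\<close> and all these approximations, which is
absurd. Hence \<open>L \<subseteq> R\<close>, although \<open>|R| \<le> \<kappa>\<close>.
For \<open>|L| \<le> \<kappa>\<close>, Player II enumerates \<open>L\<close>; then \<open>R = L\<close>, a \<open>\<kappa>\<close>-subset of itself.\<close>

lemma finite_ordLess_Cinfinite: "Cinfinite k \<Longrightarrow> finite A \<Longrightarrow> |A| <o k"
  by (rule Cfinite_ordLess_Cinfinite)
    (simp_all add: cfinite_def Field_card_of card_of_Card_order card_of_card_order_on)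

lemma card_of_ordLeq_Field:
  assumes "Card_order k" "|A| \<le>o k"
  shows "|A| \<le>o |Field k|"
  using assms(2) ordIso_symmetric[OF card_of_Field_ordIso[OF assms(1)]] by (rule ordLeq_ordIso_trans)

lemma Pow_ordLeq_if_kappa_less_kappa_eq:
  assumes k: "Cinfinite k" and kk: "kappa_less_kappa_eq k" and Y: "|Y| <o k"
  shows "|Pow Y| \<le>o k"
proof -
  have "|Y| \<le>o |Field k|"
    using k ordLess_imp_ordLeq[OF Y] by (blast intro: card_of_ordLeq_Field)
  then obtain f where f: "inj_on f Y" "f ` Y \<subseteq> Field k"
    unfolding card_of_ordLeq[symmetric] by blast
  have "|f ` Y| <o k"
    using ordLeq_ordLess_trans[OF card_of_image Y] .
  then have "|Func (f ` Y) (Field k)| \<le>o k"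
    using kk f(2) unfolding kappa_less_kappa_eq_def by blast
  moreover have "ctwo ^c |Y| \<le>o |Field k| ^c |f ` Y|"
  proof (rule cexp_mono')
    show "ctwo \<le>o |Field k|"
      using k by (intro ctwo_ordLeq_Cinfinite)
        (simp add: cinfinite_def Field_card_of card_of_card_order_on)
    show "|Y| \<le>o |f ` Y|"
      unfolding card_of_ordLeq[symmetric] using f(1) by blast
  qed (simp add: Field_card_of)
  then have "|Pow Y| \<le>o |Func (f ` Y) (Field k)|"
    unfolding cexp_def ctwo_def Field_card_of by (rule ordIso_ordLeq_trans[OF card_of_Pow_Func])
  ultimately show ?thesis
    by (rule ordLeq_transitive[rotated])
qed

definition enum_subsets :: "'k rel \<Rightarrow> 'a set \<Rightarrow> 'k \<Rightarrow> 'a set" where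
  "enum_subsets k Y = (SOME e. Pow Y \<subseteq> e ` Field k)"

lemma Pow_subset_enum_subsets:
  assumes "Cinfinite k" "kappa_less_kappa_eq k" "|Y| <o k"
  shows "Pow Y \<subseteq> enum_subsets k Y ` Field k"
proof -
  have "|Pow Y| \<le>o |Field k|"
    using assms(1) Pow_ordLeq_if_kappa_less_kappa_eq[OF assms] by (blast intro: card_of_ordLeq_Field)
  then obtain e where "e ` Field k = Pow Y"
    using card_of_ordLeq2[of "Pow Y" "Field k"] by auto
  then show ?thesis
    unfolding enum_subsets_def by (intro someI[where P = "\<lambda>e. Pow Y \<subseteq> e ` Field k"]) blast
qed

lemma Card_order_in_under_self: "Card_order k \<Longrightarrow> \<alpha> \<in> Field k \<Longrightarrow> \<alpha> \<in> under k \<alpha>"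
  by (rule Refl_under_in) (use card_order_on_well_order_on in \<open>auto simp: order_on_defs\<close>)

definition gap :: "'a set \<Rightarrow> 'a rel \<Rightarrow> 'a set \<Rightarrow> 'a set \<Rightarrow> 'a set" where
  "gap L r D U = {x\<in>L. (\<forall>d\<in>D. (d, x) \<in> r \<and> d \<noteq> x) \<and> (\<forall>u\<in>U. (x, u) \<in> r \<and> x \<noteq> u)}"

lemma in_gap_of_own_cut:
  assumes "linear_order_on L r" "a \<in> L" "Y \<subseteq> L" "a \<notin> Y"
  shows "a \<in> gap L r (down_set r Y a) (Y - down_set r Y a)"
proof -
  have "(a, u) \<in> r" if "u \<in> Y" "(u, a) \<notin> r" for u
    using assms that unfolding linear_order_on_def total_on_def by auto
  then show ?thesis
    using assms(2,4) unfolding gap_def down_set_def by auto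
qed

lemma gap_of_cut_disjoint:
  assumes lin: "linear_order_on L r" and a: "a \<in> L" "a \<notin> R"
    and S: "cofinal_in r S (down_set r R a)" and T: "coinitial_in r T (up_set r R a)"
    and Y: "S \<union> T \<subseteq> Y"
  shows "gap L r (down_set r Y a) (Y - down_set r Y a) \<inter> R = {}"
proof (rule ccontr)
  assume "gap L r (down_set r Y a) (Y - down_set r Y a) \<inter> R \<noteq> {}"
  then obtain c where c_gap: "c \<in> gap L r (down_set r Y a) (Y - down_set r Y a)" and "c \<in> R"
    by blast
  have r_antisym: "antisym r" and r_total: "total_on L r"
    using lin unfolding linear_order_on_def partial_order_on_def by auto
  have "c \<in> L" "c \<noteq> a"
    using c_gap \<open>c \<in> R\<close> a(2) unfolding gap_def by auto
  then consider "(c, a) \<in> r" | "(a, c) \<in> r"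
    using r_total a(1) unfolding total_on_def by blast
  then show False
  proof cases
    case 1
    then obtain y where "y \<in> S" "(c, y) \<in> r"
      using S \<open>c \<in> R\<close> unfolding cofinal_in_def down_set_def by blast
    moreover have "y \<in> down_set r Y a"
      using \<open>y \<in> S\<close> S Y unfolding cofinal_in_def down_set_def by blast
    then have "(y, c) \<in> r" "y \<noteq> c"
      using c_gap unfolding gap_def by blast+
    with \<open>(c, y) \<in> r\<close> r_antisym show False
      by (blast dest: antisymD)
  next
    case 2
    then obtain y where "y \<in> T" "(y, c) \<in> r"
      using T \<open>c \<in> R\<close> unfolding coinitial_in_def up_set_def by blast
    moreover have "(a, y) \<in> r" "y \<in> R" "y \<in> Y"
      using \<open>y \<in> T\<close> T Y unfolding coinitial_in_def up_set_def by blast+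
    then have "y \<in> Y - down_set r Y a"
      using a(2) r_antisym unfolding down_set_def by (auto dest: antisymD)
    then have "(c, y) \<in> r" "c \<noteq> y"
      using c_gap unfolding gap_def by blast+
    with \<open>(y, c) \<in> r\<close> r_antisym show False
      by (blast dest: antisymD)
  qed
qed

definition pick :: "'a set \<Rightarrow> 'a set" where
  "pick X = (if X = {} then {} else {SOME x. x \<in> X})"

lemma pick_subset: "pick X \<subseteq> X"
  by (simp add: pick_def some_in_eq)

lemma finite_pick: "finite (pick X)"
  by (simp add: pick_def)

lemma pick_empty_iff: "pick X = {} \<longleftrightarrow> X = {}"
  by (simp add: pick_def)

definition played_before :: "'k rel \<Rightarrow> ('k \<Rightarrow> 'a set \<times> 'a set) \<Rightarrow> 'k \<Rightarrow> 'a set" where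
  "played_before k p \<gamma> = (\<Union>\<nu>\<in>underS k \<gamma>. snd (p \<nu>))"

definition cut_filler :: "'a set \<Rightarrow> 'a rel \<Rightarrow> 'k rel \<Rightarrow> 'a set \<Rightarrow> 'k \<Rightarrow> 'a set" where
  "cut_filler L r k Y i = pick (gap L r (enum_subsets k Y i) (Y - enum_subsets k Y i))"

definition filling_strategy ::
    "'a set \<Rightarrow> 'a rel \<Rightarrow> 'k rel \<Rightarrow> 'k \<Rightarrow> ('k \<Rightarrow> 'a set \<times> 'a set) \<Rightarrow> 'a set" where
  "filling_strategy L r k \<alpha> p = played_before k p \<alpha> \<union>
     (\<Union>\<gamma>\<in>underS k \<alpha>. \<Union>i\<in>underS k \<alpha>. cut_filler L r k (played_before k p \<gamma>) i)"

lemma played_before_restr: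
  "underS k \<gamma> \<subseteq> underS k \<alpha> \<Longrightarrow> played_before k (restr k p \<alpha>) \<gamma> = played_before k p \<gamma>"
  unfolding played_before_def restr_def by (auto intro!: SUP_cong)

lemma played_before_subset_result: "played_before k p \<gamma> \<subseteq> play_result k p"
  using Order_Relation.underS_Field[of k \<gamma>] unfolding played_before_def play_result_def by blast

locale infinite_regular_card =
  fixes k :: "'k rel"
  assumes Cinfinite: "Cinfinite k" and regular: "regularCard k"
begin

lemma Linear_order: "Linear_order k"
  using Cinfinite card_order_on_well_order_on unfolding well_order_on_def by blast

lemma TRANS: "trans k" and ANTISYM: "antisym k"
  and REFL: "refl_on (Field k) k" and TOTAL: "total_on (Field k) k"
  using Linear_order unfolding order_on_defs by auto

lemma small_subset_bounded:
  assumes B: "B \<subseteq> Field k" "|B| <o k"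
  shows "\<exists>\<gamma>\<in>Field k. B \<subseteq> underS k \<gamma>"
proof -
  have "\<not> cofinal B k"
  proof
    assume "cofinal B k"
    then have "|B| =o k"
      using regular B(1) unfolding regularCard_def by blast
    with B(2) show False
      using not_ordLess_ordIso by blast
  qed
  then obtain a where a: "a \<in> Field k" and "\<forall>b\<in>B. a = b \<or> (a, b) \<notin> k"
    unfolding cofinal_def by blast
  then have below_a: "(b, a) \<in> k" if "b \<in> B" for b
    using that B(1) refl_onD[OF REFL a] TOTAL a unfolding total_on_def by (metis subsetD)
  obtain \<gamma> where \<gamma>: "\<gamma> \<in> Field k" "a \<noteq> \<gamma>" "(a, \<gamma>) \<in> k"
    using infinite_Card_order_limit[OF _ _ a] Cinfinite unfolding cinfinite_def by blast
  have "b \<in> underS k \<gamma>" if "b \<in> B" for b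
  proof -
    have "(b, \<gamma>) \<in> k"
      using TRANS below_a[OF that] \<gamma>(3) by (rule transD)
    moreover have "b \<noteq> \<gamma>"
      using ANTISYM below_a[OF that] \<gamma>(2,3) by (auto dest: antisymD)
    ultimately show ?thesis
      unfolding underS_def by blast
  qed
  with \<gamma>(1) show ?thesis
    by blast
qed

lemma underS_small: "\<alpha> \<in> Field k \<Longrightarrow> |underS k \<alpha>| <o k"
  using Cinfinite by (blast intro: card_of_underS)

lemma played_before_small:
  assumes "\<gamma> \<in> Field k" and moves: "\<forall>\<nu>\<in>underS k \<gamma>. snd (p \<nu>) \<subseteq> L \<and> |snd (p \<nu>)| <o k"
  shows "played_before k p \<gamma> \<subseteq> L" "|played_before k p \<gamma>| <o k"
proof -
  show "played_before k p \<gamma> \<subseteq> L"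
    unfolding played_before_def using moves by blast
  show "|played_before k p \<gamma>| <o k"
    unfolding played_before_def
    by (rule regularCard_UNION_bound[OF Cinfinite regular underS_small[OF assms(1)]]) (use moves in blast)
qed

lemma cut_filler_small:
  "cut_filler L r k Y i \<subseteq> L" "|cut_filler L r k Y i| <o k"
proof -
  show "cut_filler L r k Y i \<subseteq> L"
    using pick_subset unfolding cut_filler_def gap_def by fastforce
  show "|cut_filler L r k Y i| <o k"
    unfolding cut_filler_def by (rule finite_ordLess_Cinfinite[OF Cinfinite finite_pick])
qed

lemma filling_strategy_small:
  assumes "\<alpha> \<in> Field k" and moves: "\<forall>\<nu>\<in>underS k \<alpha>. snd (p \<nu>) \<subseteq> L \<and> |snd (p \<nu>)| <o k"
  shows "filling_strategy L r k \<alpha> p \<subseteq> L" "|filling_strategy L r k \<alpha> p| <o k"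
proof -
  show "filling_strategy L r k \<alpha> p \<subseteq> L"
    unfolding filling_strategy_def
    by (intro Un_least UN_least played_before_small(1)[OF assms] cut_filler_small(1))
  have "|\<Union>\<gamma>\<in>underS k \<alpha>. \<Union>i\<in>underS k \<alpha>. cut_filler L r k (played_before k p \<gamma>) i| <o k"
    by (rule regularCard_UNION_bound[OF Cinfinite regular underS_small[OF assms(1)]])+
      (rule cut_filler_small(2))
  then show "|filling_strategy L r k \<alpha> p| <o k"
    unfolding filling_strategy_def
    by (rule Un_Cinfinite_bound_strict[OF played_before_small(2)[OF assms] _ Cinfinite])
qed

lemma filling_strategy_restr:
  "filling_strategy L r k \<alpha> (restr k p \<alpha>) = filling_strategy L r k \<alpha> p"
proof -
  have "underS k \<gamma> \<subseteq> underS k \<alpha>" if "\<gamma> \<in> underS k \<alpha>" for \<gamma>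
    by (rule underS_incr[OF TRANS ANTISYM]) (use that in \<open>simp add: underS_def\<close>)
  then show ?thesis
    unfolding filling_strategy_def by (simp add: played_before_restr cong: SUP_cong)
qed

lemma filling_strategy_legal:
  assumes "\<alpha> \<in> Field k" and "\<forall>\<beta>\<in>underS k \<alpha>. moveII_ok L k p \<beta>"
    and follows: "fst (p \<alpha>) = filling_strategy L r k \<alpha> p"
  shows "moveI_ok L k p \<alpha>"
proof -
  have "\<forall>\<nu>\<in>underS k \<alpha>. snd (p \<nu>) \<subseteq> L \<and> |snd (p \<nu>)| <o k"
    using assms(2) unfolding moveII_ok_def by blast
  note small = filling_strategy_small[OF assms(1) this]
  have "played_before k p \<alpha> \<subseteq> filling_strategy L r k \<alpha> p"
    unfolding filling_strategy_def by (rule Un_upper1)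
  with small show ?thesis
    unfolding moveI_ok_def follows played_before_def[symmetric] by (intro conjI)
qed

lemma small_subset_of_result_played_before:
  assumes "X \<subseteq> play_result k p" "|X| <o k"
  shows "\<exists>\<gamma>\<in>Field k. X \<subseteq> played_before k p \<gamma>"
proof -
  have "\<forall>x\<in>X. \<exists>\<beta>. \<beta> \<in> Field k \<and> x \<in> snd (p \<beta>)"
    using assms(1) unfolding play_result_def by blast
  from bchoice[OF this] obtain stage
    where stage: "\<forall>x\<in>X. stage x \<in> Field k \<and> x \<in> snd (p (stage x))"
    by blast
  have "stage ` X \<subseteq> Field k" "|stage ` X| <o k"
    using stage ordLeq_ordLess_trans[OF card_of_image assms(2)] by auto
  then obtain \<gamma> where "\<gamma> \<in> Field k" "stage ` X \<subseteq> underS k \<gamma>"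
    using small_subset_bounded by blast
  with stage show ?thesis
    unfolding played_before_def by blast
qed

lemma cut_filler_in_result:
  assumes legal: "legal_play L k p"
    and follows: "\<forall>\<beta>\<in>Field k. fst (p \<beta>) = filling_strategy L r k \<beta> p"
    and "\<gamma> \<in> Field k" "i \<in> Field k"
  shows "cut_filler L r k (played_before k p \<gamma>) i \<subseteq> play_result k p"
proof -
  have "{\<gamma>, i} \<subseteq> Field k" "|{\<gamma>, i}| <o k"
    using assms(3,4) by (auto intro: finite_ordLess_Cinfinite[OF Cinfinite])
  then obtain \<alpha> where \<alpha>: "\<alpha> \<in> Field k" "\<gamma> \<in> underS k \<alpha>" "i \<in> underS k \<alpha>"
    using small_subset_bounded by (metis insert_subset)
  have "cut_filler L r k (played_before k p \<gamma>) i \<subseteq> filling_strategy L r k \<alpha> p"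
    unfolding filling_strategy_def using \<alpha>(2,3) by (intro le_supI2) blast
  also have "\<dots> = fst (p \<alpha>)"
    using follows \<alpha>(1) by simp
  also have "\<dots> \<subseteq> snd (p \<alpha>)"
    using legal \<alpha>(1) unfolding legal_play_def moveII_ok_def by blast
  also have "\<dots> \<subseteq> play_result k p"
    using \<alpha>(1) unfolding play_result_def by blast
  finally show ?thesis .
qed

lemma legal_play_played_before_small:
  assumes "legal_play L k p" "\<gamma> \<in> Field k"
  shows "played_before k p \<gamma> \<subseteq> L" "|played_before k p \<gamma>| <o k"
proof -
  have "\<forall>\<nu>\<in>underS k \<gamma>. snd (p \<nu>) \<subseteq> L \<and> |snd (p \<nu>)| <o k"
    using assms(1) Order_Relation.underS_Field[of k \<gamma>] unfolding legal_play_def moveII_ok_def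
    by blast
  then show "played_before k p \<gamma> \<subseteq> L" "|played_before k p \<gamma>| <o k"
    by (rule played_before_small[OF assms(2)])+
qed

lemma gap_meets_result:
  assumes kk: "kappa_less_kappa_eq k" and legal: "legal_play L k p"
    and follows: "\<forall>\<beta>\<in>Field k. fst (p \<beta>) = filling_strategy L r k \<beta> p"
    and \<gamma>: "\<gamma> \<in> Field k" and D: "D \<subseteq> played_before k p \<gamma>"
    and nonempty: "gap L r D (played_before k p \<gamma> - D) \<noteq> {}"
  shows "gap L r D (played_before k p \<gamma> - D) \<inter> play_result k p \<noteq> {}"
proof -
  define Y where "Y = played_before k p \<gamma>"
  have "D \<in> enum_subsets k Y ` Field k"
    using legal_play_played_before_small(2)[OF legal \<gamma>] D unfolding Y_def
    by (intro subsetD[OF Pow_subset_enum_subsets[OF Cinfinite kk]]) auto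
  then obtain i where i: "D = enum_subsets k Y i" "i \<in> Field k"
    by (rule imageE)
  have "pick (gap L r D (Y - D)) \<subseteq> play_result k p"
    using cut_filler_in_result[OF legal follows \<gamma> i(2)]
    unfolding cut_filler_def i(1)[symmetric] Y_def[symmetric] .
  moreover have "pick (gap L r D (Y - D)) \<noteq> {}"
    using nonempty unfolding Y_def by (simp add: pick_empty_iff)
  ultimately show ?thesis
    using pick_subset[of "gap L r D (Y - D)"] unfolding Y_def by blast
qed

lemma filling_strategy_result_covers:
  assumes lin: "linear_order_on L r" and kk: "kappa_less_kappa_eq k"
    and legal: "legal_play L k p"
    and follows: "\<forall>\<beta>\<in>Field k. fst (p \<beta>) = filling_strategy L r k \<beta> p"
    and ks: "kappa_subset L r k (play_result k p)"
  shows "L \<subseteq> play_result k p"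
proof
  fix a assume a: "a \<in> L"
  let ?R = "play_result k p"
  show "a \<in> ?R"
  proof (rule ccontr)
    assume a_notin: "a \<notin> ?R"
    obtain S T where S: "cofinal_in r S (down_set r ?R a)" "|S| <o k"
      and T: "coinitial_in r T (up_set r ?R a)" "|T| <o k"
      using ks a unfolding kappa_subset_def cf_less_def ci_less_def by blast
    have "S \<union> T \<subseteq> ?R"
      using S(1) T(1) unfolding cofinal_in_def coinitial_in_def down_set_def up_set_def by blast
    then obtain \<gamma> where \<gamma>: "\<gamma> \<in> Field k" "S \<union> T \<subseteq> played_before k p \<gamma>"
      using small_subset_of_result_played_before Un_Cinfinite_bound_strict[OF S(2) T(2) Cinfinite]
      by blast
    define Y where "Y = played_before k p \<gamma>"
    define G where "G = gap L r (down_set r Y a) (Y - down_set r Y a)"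
    have "a \<notin> Y"
      using played_before_subset_result a_notin unfolding Y_def by fast
    then have "a \<in> G"
      unfolding G_def Y_def
      by (rule in_gap_of_own_cut[OF lin a legal_play_played_before_small(1)[OF legal \<gamma>(1)]])
    then have "G \<inter> ?R \<noteq> {}"
      unfolding G_def Y_def
      by (intro gap_meets_result[OF kk legal follows \<gamma>(1)]) (auto simp: down_set_def)
    moreover have "G \<inter> ?R = {}"
      unfolding G_def by (rule gap_of_cut_disjoint[OF lin a a_notin S(1) T(1)]) (use \<gamma>(2) Y_def in blast)
    ultimately show False
      by blast
  qed
qed

lemma play_result_ordLeq: "legal_play L k p \<Longrightarrow> |play_result k p| \<le>o k"
  unfolding play_result_def legal_play_def moveII_ok_def
  using ordIso_imp_ordLeq[OF card_of_Field_ordIso] Cinfinite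
  by (intro UNION_Cinfinite_bound) (auto intro: ordLess_imp_ordLeq)

lemma filling_strategy_winning:
  assumes lin: "linear_order_on L r" and kk: "kappa_less_kappa_eq k" and big: "k <o |L|"
  shows "winning_I L r k (filling_strategy L r k)"
  unfolding winning_I_def
proof (intro conjI allI impI ballI)
  fix p \<alpha>
  assume "\<alpha> \<in> Field k"
    and h: "(\<forall>\<beta>\<in>underS k \<alpha>. moveI_ok L k p \<beta> \<and> moveII_ok L k p \<beta>) \<and>
      (\<forall>\<beta>\<in>under k \<alpha>. fst (p \<beta>) = filling_strategy L r k \<beta> (restr k p \<beta>))"
  moreover have "\<alpha> \<in> under k \<alpha>"
    using Cinfinite \<open>\<alpha> \<in> Field k\<close> by (blast intro: Card_order_in_under_self)
  ultimately show "moveI_ok L k p \<alpha>"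
    by (intro filling_strategy_legal) (auto simp: filling_strategy_restr)
next
  fix p
  assume "legal_play L k p \<and> (\<forall>\<beta>\<in>Field k. fst (p \<beta>) = filling_strategy L r k \<beta> (restr k p \<beta>))"
  then have legal: "legal_play L k p"
    and follows: "\<forall>\<beta>\<in>Field k. fst (p \<beta>) = filling_strategy L r k \<beta> p"
    by (simp_all add: filling_strategy_restr)
  show "\<not> kappa_subset L r k (play_result k p)"
  proof
    assume "kappa_subset L r k (play_result k p)"
    then have "L \<subseteq> play_result k p"
      by (rule filling_strategy_result_covers[OF lin kk legal follows])
    then have "|L| \<le>o |play_result k p|"
      by (rule card_of_mono1)
    then have "|L| \<le>o k"
      using play_result_ordLeq[OF legal] by (rule ordLeq_transitive)
    with big show False
      using not_ordLess_ordLeq by blast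
  qed
qed

end

lemma kappa_subset_refl:
  assumes "refl_on A r" and k: "Cinfinite k"
  shows "kappa_subset A r k A"
proof -
  have "cofinal_in r {a} (down_set r A a)" "coinitial_in r {a} (up_set r A a)" if "a \<in> A" for a
    using that assms(1)
    unfolding cofinal_in_def coinitial_in_def down_set_def up_set_def refl_on_def by auto
  moreover have "|{a}| <o k" for a :: 'a
    by (rule finite_ordLess_Cinfinite[OF k]) simp
  ultimately show ?thesis
    unfolding kappa_subset_def cf_less_def ci_less_def by blast
qed

lemma enumerating_strategy_winning:
  assumes k: "Cinfinite k" and refl: "refl_on L r" and enum: "L \<subseteq> g ` Field k"
  shows "winning_II L r k (\<lambda>\<beta> h x. x \<union> ({g \<beta>} \<inter> L))"
  unfolding winning_II_def
proof (intro conjI allI impI ballI)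
  fix p \<alpha>
  assume "\<alpha> \<in> Field k"
    and h: "(\<forall>\<beta>\<in>underS k \<alpha>. moveI_ok L k p \<beta> \<and> moveII_ok L k p \<beta>) \<and> moveI_ok L k p \<alpha> \<and>
      (\<forall>\<beta>\<in>under k \<alpha>. snd (p \<beta>) = fst (p \<beta>) \<union> ({g \<beta>} \<inter> L))"
  moreover have "\<alpha> \<in> under k \<alpha>"
    using k \<open>\<alpha> \<in> Field k\<close> by (blast intro: Card_order_in_under_self)
  ultimately have "snd (p \<alpha>) = fst (p \<alpha>) \<union> ({g \<alpha>} \<inter> L)"
    by blast
  moreover have "|{g \<alpha>} \<inter> L| <o k"
    by (rule finite_ordLess_Cinfinite[OF k]) simp
  ultimately show "moveII_ok L k p \<alpha>"
    using h Un_Cinfinite_bound_strict[OF _ _ k] unfolding moveI_ok_def moveII_ok_def by auto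
next
  fix p
  assume "legal_play L k p \<and> (\<forall>\<beta>\<in>Field k. snd (p \<beta>) = fst (p \<beta>) \<union> ({g \<beta>} \<inter> L))"
  then have "play_result k p = L"
    using enum unfolding legal_play_def moveII_ok_def play_result_def by auto
  then show "kappa_subset L r k (play_result k p)"
    using kappa_subset_refl[OF refl k] by simp
qed

lemma II_wins_if_card_ordLeq:
  assumes k: "Cinfinite k" and refl: "refl_on L r" and small: "|L| \<le>o k"
  shows "II_wins L r k"
proof -
  have "|L| \<le>o |Field k|"
    using k small by (blast intro: card_of_ordLeq_Field)
  then obtain g where "L \<subseteq> g ` Field k"
    using card_of_ordLeq2[of L "Field k"] by (cases "L = {}") auto
  then show ?thesis
    unfolding II_wins_def using enumerating_strategy_winning[OF k refl] by blast
qed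

theorem proposition2:
  fixes k :: "'k rel"
  assumes "Card_order k" and "regularCard k" and "(natLeq, k) \<in> ordLess"
    and "kappa_less_kappa_eq k"
  shows "(\<forall>(L :: 'a set) r. linear_order_on L r \<and> (k, card_of L) \<in> ordLess \<longrightarrow> I_wins L r k) \<and>
         (\<forall>(L :: 'a set) r. linear_order_on L r \<longrightarrow> determined L r k)"
proof -
  have k: "Cinfinite k"
    using assms(1) cinfinite_mono[OF ordLess_imp_ordLeq[OF assms(3)] natLeq_cinfinite] by blast
  interpret infinite_regular_card k
    using k assms(2) by unfold_locales
  have I: "I_wins L r k" if "linear_order_on L r" "k <o |L|" for L :: "'a set" and r
    using filling_strategy_winning[OF that(1) assms(4) that(2)] unfolding I_wins_def by blast
  have "determined L r k" if lin: "linear_order_on L r" for L :: "'a set" and r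
  proof (cases "k <o |L|")
    case True
    then show ?thesis
      unfolding determined_def using I[OF lin] by blast
  next
    case False
    then have "|L| \<le>o k"
      using not_ordLess_iff_ordLeq card_of_Well_order card_order_on_well_order_on[OF assms(1)]
      by blast
    moreover have "refl_on L r"
      using lin unfolding order_on_defs by blast
    ultimately show ?thesis
      unfolding determined_def using II_wins_if_card_ordLeq[OF k] by blast
  qed
  with I show ?thesis
    by blast
qed

end
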